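(* For each $j$ (indices mod $8g-4$), with $\ell$ denoting arc length on the unit circle: (i) there exist $a_j,b_j\in(P_j,Q_j)$ with $\ell(P_j,a_j)>\frac12\ell(P_j,Q_j)$ and $\ell(b_j,Q_j)>\frac12\ell(P_j,Q_j)$ such that $T_j(a_j)=P_{\rho(j)+1}$ and $T_{j-1}(b_j)=Q_{\theta(j-1)}$; (ii) for every $x\in[P_j,Q_j]$ with $\ell(P_j,x)\le\frac12\ell(P_j,Q_j)$, $T_j(x)\in[Q_{\sigma(j)+1},P_{\sigma(j)+2}]$; (iii) for every $x\in[P_j,Q_j]$ with $\ell(x,Q_j)\le\frac12\ell(P_j,Q_j)$, $T_{j-1}(x)\in[Q_{\theta(j-1)},P_{\theta(j-1)+1}]$.
   Context: Setting. Fix $g\ge 2$; indices are mod $8g-4$. Let $\mathcal F$ be the regular hyperbolic $(8g-4)$-gon in the unit disk centered at $0$ with all interior angles $\pi/2$, sides labeled $1,\dots,8g-4$ counterclockwise, side $i$ joining vertices $V_i$ and $V_{i+1}$. The complete geodesic extending side $i$ goes from $P_i$ (beyond $V_i$) to $Q_{i+1}$ (beyond $V_{i+1}$) on the unit circle; counterclockwise order $P_1,Q_1,P_2,Q_2,\dots,P_{8g-4},Q_{8g-4}$. $\sigma(i)=4g-i$ ($i$ odd), $\sigma(i)=2-i$ ($i$ even), $\rho(i)=\sigma(i)+1$, $\theta(i)=\sigma(i)-1$. $T_i$ is the Möbius transformation mapping side $i$ onto side $\sigma(i)$, with isometric circle the geodesic $P_iQ_{i+1}$, mapped onto the geodesic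 $Q_{\sigma(i)+1}P_{\sigma(i)}$, inside to outside. Arcs $[A,B]$, $(A,B)$ are counterclockwise from $A$ to $B$, and $\ell(A,B)$ is the arc length of $[A,B]$. *)

theory Defs
  imports "HOL-Analysis.Analysis"
begin

definition nsides :: "nat \<Rightarrow> real" where
  "nsides g = 8 * real g - 4"

text \<open>The polygon is placed so that the
  midpoint of side i lies on the ray of angle 2 pi i / N; this fixes the (irrelevant)
  rotation of the regular polygon.  Indices are integers, everything is periodic mod N.\<close>
definition side_dir :: "nat \<Rightarrow> int \<Rightarrow> real" where
  "side_dir g i = 2 * pi * real_of_int i / nsides g"

text \<open>Half the angular width of the geodesic extending a side.  Two adjacent side
  geodesics (equal circles orthogonal to the unit circle, centres at angular distance
  2 pi / N) meet at right angles (interior angle pi/2) iff cos(beta)^2 = cos(2 pi / N).\<close>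
definition half_width :: "nat \<Rightarrow> real" where
  "half_width g = arccos (sqrt (cos (2 * pi / nsides g)))"

text \<open>Endpoints of geodesics: side i extends to the geodesic from P i to Q (i+1).\<close>
definition Pt :: "nat \<Rightarrow> int \<Rightarrow> complex" where
  "Pt g i = cis (side_dir g i - half_width g)"

definition Qt :: "nat \<Rightarrow> int \<Rightarrow> complex" where
  "Qt g i = cis (side_dir g (i - 1) + half_width g)"

definition sigma :: "nat \<Rightarrow> int \<Rightarrow> int" where
  "sigma g i = (if odd i then 4 * int g - i else 2 - i)"

definition rho :: "nat \<Rightarrow> int \<Rightarrow> int" where
  "rho g i = sigma g i + 1"

definition theta :: "nat \<Rightarrow> int \<Rightarrow> int" where
  "theta g i = sigma g i - 1"

text \<open>The isometric circle of T i: the geodesic P i Q (i+1), i.e. the circle orthogonal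
  to the unit circle with centre (1/cos beta) e^{i alpha_i} and radius tan beta.\<close>
definition iso_center :: "nat \<Rightarrow> int \<Rightarrow> complex" where
  "iso_center g i = complex_of_real (1 / cos (half_width g)) * cis (side_dir g i)"

definition iso_radius :: "nat \<Rightarrow> real" where
  "iso_radius g = tan (half_width g)"

text \<open>The Moebius transformation T i: inversion in its isometric circle followed by the
  Euclidean reflection in the line through 0 bisecting the directions of sides i and
  sigma(i).  It is orientation preserving, has isometric circle P i Q (i+1), maps it
  onto Q (sigma i + 1) P (sigma i) (inside to outside) and maps side i onto side sigma i.\<close>
definition Tmap :: "nat \<Rightarrow> int \<Rightarrow> complex \<Rightarrow> complex" where
  "Tmap g i z =
     (let w = iso_center g i + complex_of_real ((iso_radius g)\<^sup>2) / cnj (z - iso_center g i)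
      in cis (side_dir g i + side_dir g (sigma g i)) * cnj w)"

definition arclen :: "complex \<Rightarrow> complex \<Rightarrow> real" where
  "arclen A B = (if 0 \<le> Arg (B / A) then Arg (B / A) else Arg (B / A) + 2 * pi)"

definition closed_arc :: "complex \<Rightarrow> complex \<Rightarrow> complex set" where
  "closed_arc A B = {x. cmod x = 1 \<and> arclen A x \<le> arclen A B}"

definition open_arc :: "complex \<Rightarrow> complex \<Rightarrow> complex set" where
  "open_arc A B = {x. cmod x = 1 \<and> 0 < arclen A x \<and> arclen A x < arclen A B}"

end

theory Submission
  imports Defs
begin

text \<open>Write points of the unit circle as cis (alpha i + u), where alpha i = side_dir g i is the
  direction of the midpoint of side i. In the Cayley coordinate t = tan (u/2) the transformation
  T i becomes the linear map t \<mapsto> -K t followed by a rotation, where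
  K = stretch = (1 + cos \<beta>) / (1 - cos \<beta>) = cot (\<beta>/2) ^ 2. Hence
  T i (cis (alpha i + u)) = cis (alpha (sigma i) + pi + 2 * boundary_angle u) with the monotone
  function boundary_angle u = arctan (K * tan (u/2)). All three claims then reduce to comparing
  this angle with the vertices of the polygon at u = \<plusminus>\<beta> (the ends of the isometric circle),
  u = \<plusminus>\<delta>/2 (the midpoint of the arc [P j, Q j]) and u = \<delta> - \<beta>, where \<delta> = 2 pi/(8g - 4) \<le> pi/6.
  The two comparisons that are not identities are trigonometric inequalities in \<delta> and \<beta>; they
  follow from Taylor bounds and the estimate 7/10 \<delta> \<le> \<beta> \<le> 18/25 \<delta> (in fact \<beta> \<approx> \<delta> / sqrt 2).\<close>

lemma Maclaurin_cos_bound: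
  "\<bar>cos x - (\<Sum>m<n. cos_coeff m * x ^ m)\<bar> \<le> \<bar>x\<bar> ^ n / fact n"
proof -
  obtain t where "cos x = (\<Sum>m<n. cos_coeff m * x ^ m) + cos (t + 1/2 * real n * pi) / fact n * x ^ n"
    using Maclaurin_cos_expansion by blast
  then have "\<bar>cos x - (\<Sum>m<n. cos_coeff m * x ^ m)\<bar> = \<bar>cos (t + 1/2 * real n * pi)\<bar> * \<bar>x\<bar> ^ n / fact n"
    by (simp add: abs_mult power_abs)
  also have "\<dots> \<le> \<bar>x\<bar> ^ n / fact n"
    by (intro divide_right_mono mult_left_le_one_le) auto
  finally show ?thesis .
qed

lemma cos_ge_quadratic: "1 - x\<^sup>2 / 2 \<le> cos (x::real)"
  using Maclaurin_cos_bound[of x 2]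
  by (simp add: cos_coeff_def lessThan_nat_numeral fact_numeral abs_if split: if_split_asm)

lemma cos_le_quartic: "cos (x::real) \<le> 1 - x\<^sup>2 / 2 + x ^ 4 / 24"
  using Maclaurin_cos_bound[of x 4]
  by (simp add: cos_coeff_def lessThan_nat_numeral fact_numeral abs_if split: if_split_asm)

lemma cos_ge_sextic: "1 - x\<^sup>2 / 2 + x ^ 4 / 24 - x ^ 6 / 720 \<le> cos (x::real)"
  using Maclaurin_cos_bound[of x 6]
  by (simp add: cos_coeff_def lessThan_nat_numeral fact_numeral abs_if split: if_split_asm)

lemma tan_ge_self:
  assumes "0 \<le> x" "x < pi/2" shows "x \<le> tan (x::real)"
proof -
  have "tan 0 - 0 \<le> tan x - x"
  proof (rule DERIV_nonneg_imp_nondecreasing[OF assms(1)])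
    fix u assume u: "0 \<le> u" "u \<le> x"
    then have "0 < cos u" using assms by (intro cos_gt_zero_pi) auto
    moreover have "cos u ^ 2 \<le> 1" by (simp add: abs_square_le_1)
    ultimately have "0 \<le> inverse (cos u ^ 2) - 1" by (simp add: field_simps)
    moreover have "((\<lambda>x. tan x - x) has_real_derivative inverse (cos u ^ 2) - 1) (at u)"
      using \<open>0 < cos u\<close> by (auto intro!: derivative_eq_intros)
    ultimately show "\<exists>y. ((\<lambda>x. tan x - x) has_real_derivative y) (at u) \<and> 0 \<le> y" by blast
  qed
  then show ?thesis by simp
qed

lemma mult_tan_le_self:
  assumes "0 \<le> x" "x < pi/2" "0 < c" "x\<^sup>2 \<le> 2 * (1 - c)"
  shows "c * tan x \<le> (x::real)"
proof -
  have "c \<le> cos x" using cos_ge_quadratic[of x] assms(4) by simp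
  then have "c * tan x \<le> cos x * tan x"
    using assms by (intro mult_right_mono tan_pos_pi2_le) auto
  also have "\<dots> = sin x" using \<open>c \<le> cos x\<close> assms(3) by (simp add: tan_def)
  also have "\<dots> \<le> x" using sin_x_le_x[OF assms(1)] .
  finally show ?thesis .
qed

lemma power_six_le:
  assumes "x\<^sup>2 \<le> 11/40"
  shows "x ^ 6 \<le> 121/1600 * (x::real)\<^sup>2"
proof -
  have "(x\<^sup>2)\<^sup>2 \<le> (11/40)\<^sup>2" using assms by (intro power_mono) auto
  then have "(x\<^sup>2)\<^sup>2 * x\<^sup>2 \<le> (11/40)\<^sup>2 * x\<^sup>2" by (intro mult_right_mono) auto
  then show ?thesis by (simp add: power_divide flip: power_add power_mult)
qed

lemma cos_sq_le_cos:
  assumes "d\<^sup>2 \<le> 11/40"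
  shows "cos (18/25 * d) ^ 2 \<le> cos (d::real)"
proof -
  define e E F where "e = d\<^sup>2" and "E = d ^ 4" and "F = d ^ 6"
  have "0 \<le> e" "e \<le> 11/40" "E \<le> 11/40 * e" "F \<le> 121/1600 * e"
    using assms power_six_le[OF assms] mult_right_mono[OF assms, of "d\<^sup>2"]
    by (simp_all add: e_def E_def F_def flip: power_add)
  moreover have "cos (18/25 * d) ^ 2 = (1 + cos (2 * (18/25 * d))) / 2"
    unfolding cos_double_cos[of "18/25 * d"] by simp
  moreover have "cos (2 * (18/25 * d)) \<le> 1 - 1296/625 * e / 2 + 1679616/390625 * E / 24"
    using cos_le_quartic[of "2 * (18/25 * d)"]
    by (simp add: e_def E_def power_mult_distrib power_divide)
  moreover have "1 - e / 2 + E / 24 - F / 720 \<le> cos d"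
    using cos_ge_sextic[of d] by (simp add: e_def E_def F_def)
  ultimately show ?thesis by (simp add: field_simps)
qed

lemma cos_le_cos_sq:
  assumes "d\<^sup>2 \<le> 11/40"
  shows "cos (d::real) \<le> cos (7/10 * d) ^ 2"
proof -
  define e E F where "e = d\<^sup>2" and "E = d ^ 4" and "F = d ^ 6"
  have "0 \<le> e" "0 \<le> E" "F \<le> 121/1600 * e"
    using power_six_le[OF assms] by (simp_all add: e_def E_def F_def)
  moreover have "cos d \<le> 1 - e / 2 + E / 24"
    using cos_le_quartic[of d] by (simp add: e_def E_def)
  moreover have "1 - 49/25 * e / 2 + 2401/625 * E / 24 - 117649/15625 * F / 720
      \<le> cos (2 * (7/10 * d))"
    using cos_ge_sextic[of "2 * (7/10 * d)"]
    by (simp add: e_def E_def F_def power_mult_distrib power_divide)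
  moreover have "cos (7/10 * d) ^ 2 = (1 + cos (2 * (7/10 * d))) / 2"
    unfolding cos_double_cos[of "7/10 * d"] by simp
  ultimately show ?thesis by (simp add: field_simps)
qed

lemma arccos_sqrt_cos_bounds:
  fixes d :: real
  assumes "0 < d" "d \<le> pi/6"
  shows "7/10 * d \<le> arccos (sqrt (cos d))" "arccos (sqrt (cos d)) \<le> 18/25 * d"
proof -
  define b where "b = arccos (sqrt (cos d))"
  have "d \<le> 1309/2500" using assms pi_approx by simp
  then have "d\<^sup>2 \<le> (1309/2500)\<^sup>2" using assms by (intro power_mono) auto
  then have d2: "d\<^sup>2 \<le> 11/40" by (simp add: power_divide)
  have "0 < cos d" using assms pi_gt3 by (intro cos_gt_zero_pi) auto
  then have "-1 \<le> sqrt (cos d)" "sqrt (cos d) \<le> 1" by (auto intro: order_trans[of _ 0])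
  then have cos_b: "cos b = sqrt (cos d)" and b: "0 \<le> b" "b \<le> pi"
    unfolding b_def by (auto intro: cos_arccos arccos_lbound arccos_ubound)
  have "sqrt (cos d) \<le> cos (7/10 * d)"
    using real_sqrt_le_mono[OF cos_le_cos_sq[OF d2]] assms pi_gt3 by (simp add: cos_ge_zero)
  then show "7/10 * d \<le> b" using cos_b b assms pi_gt3 by (subst cos_mono_le_eq[symmetric]) auto
  have "cos (18/25 * d) \<le> sqrt (cos d)" using cos_sq_le_cos[OF d2] by (intro real_le_rsqrt)
  then show "b \<le> 18/25 * d" using cos_b b assms pi_gt3 by (subst cos_mono_le_eq[symmetric]) auto
qed

lemma tan_half_sq_less:
  fixes d b :: real
  assumes "0 < d" "d \<le> pi/6" "7/10 * d \<le> b" "b \<le> 18/25 * d"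
  shows "tan (b/2) ^ 2 < tan (d/4) * tan (d - b/2)"
proof -
  have d: "d \<le> 1309/2500" using assms pi_approx by simp
  have pi2: "1309/2500 < pi/2" using pi_approx by simp
  have "(b/2)\<^sup>2 \<le> (19/100)\<^sup>2" using assms d by (intro power_mono) auto
  then have "49/50 * tan (b/2) \<le> b/2"
    using assms d pi2 by (intro mult_tan_le_self) (auto simp: power_divide)
  then have "tan (b/2)^2 \<le> (18/49 * d)^2"
    using assms d pi2 by (intro power_mono tan_pos_pi2_le) auto
  also have "\<dots> < (d/4) * (16/25 * d)" using assms by (simp add: power2_eq_square)
  also have "\<dots> \<le> tan (d/4) * tan (d - b/2)"
    using assms d pi2 tan_ge_self[of "d/4"] tan_ge_self[of "d - b/2"]
    by (intro mult_mono) (auto intro: tan_pos_pi2_le)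
  finally show ?thesis .
qed

lemma tan_mult_less_tan_half_sq:
  fixes d b :: real
  assumes "0 < d" "d \<le> pi/6" "7/10 * d \<le> b" "b \<le> 18/25 * d"
  shows "tan ((d - b)/2) * tan (d - b/2) < tan (b/2) ^ 2"
proof -
  have d: "d \<le> 1309/2500" using assms pi_approx by simp
  have pi2: "1309/2500 < pi/2" using pi_approx by simp
  have "((d - b)/2)\<^sup>2 \<le> (2/25)\<^sup>2" using assms d by (intro power_mono) auto
  then have "99/100 * tan ((d - b)/2) \<le> (d - b)/2"
    using assms d pi2 by (intro mult_tan_le_self) (auto simp: power_divide)
  then have t1: "tan ((d - b)/2) \<le> 3/20 * d / (99/100)" using assms by simp
  have "(d - b/2)\<^sup>2 \<le> (851/2500)\<^sup>2" using assms d by (intro power_mono) auto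
  then have "47/50 * tan (d - b/2) \<le> d - b/2"
    using assms d pi2 by (intro mult_tan_le_self) (auto simp: power_divide)
  then have t2: "tan (d - b/2) \<le> 13/20 * d / (47/50)" using assms by simp
  have "tan ((d - b)/2) * tan (d - b/2) \<le> (3/20 * d / (99/100)) * (13/20 * d / (47/50))"
    using t1 t2 assms d pi2 by (intro mult_mono) (auto intro: tan_pos_pi2_le)
  also have "\<dots> < (7/20 * d)^2" using assms by (simp add: power2_eq_square)
  also have "\<dots> \<le> tan (b/2) ^ 2"
    using assms d pi2 tan_ge_self[of "b/2"] by (intro power_mono) auto
  finally show ?thesis .
qed

lemma cis_double_eq_cayley:
  assumes "cos x \<noteq> 0"
  shows "cis (2 * x) = (1 + \<i> * tan x) / (1 - \<i> * tan x)"
proof -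
  have "cis x = cos x * (1 + \<i> * tan x)" "cis (-x) = cos x * (1 - \<i> * tan x)"
    using assms by (simp_all add: complex_eq_iff tan_def)
  moreover have "cis (2 * x) = cis x / cis (-x)" by (simp add: cis_divide)
  ultimately show ?thesis using assms by simp
qed

lemma moebius_cayley:
  fixes C K t :: real and e :: complex
  assumes "1 < C" "K * (C - 1) = C + 1"
  defines "e \<equiv> (1 + \<i> * t) / (1 - \<i> * t)"
  shows "(C * e - 1) / (e - C) = - (1 + \<i> * (K * t)) / (1 - \<i> * (K * t))"
proof -
  have nz: "1 - \<i> * t \<noteq> 0" "complex_of_real C - 1 \<noteq> 0"
    using assms(1) by (auto simp: complex_eq_iff)
  have "(C * e - 1) / (e - C) =
      (C * (1 + \<i> * t) - (1 - \<i> * t)) / ((1 + \<i> * t) - C * (1 - \<i> * t))"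
    using nz(1) unfolding e_def by (simp add: divide_simps)
  also have "\<dots> = ((C - 1) * (1 + \<i> * (K * t))) / (- ((C - 1) * (1 - \<i> * (K * t))))"
  proof -
    have "K * t * (C - 1) = (C + 1) * t"
      using arg_cong[OF assms(2), of "\<lambda>x. x * t"] by (simp add: algebra_simps)
    then have "C * (1 + \<i> * t) - (1 - \<i> * t) = (C - 1) * (1 + \<i> * (K * t))"
         "(1 + \<i> * t) - C * (1 - \<i> * t) = - ((C - 1) * (1 - \<i> * (K * t)))"
      by (simp_all add: complex_eq_iff algebra_simps)
    then show ?thesis by simp
  qed
  also have "\<dots> = - (1 + \<i> * (K * t)) / (1 - \<i> * (K * t))"
    using nz(2) by (simp add: minus_divide_left)
  finally show ?thesis .
qed

lemma arctan_inverse_tan: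
  assumes "0 < x" "x < pi/2"
  shows "arctan (inverse (tan x)) = pi/2 - x"
proof -
  have "arctan (tan (pi/2 - x)) = pi/2 - x" using assms by (intro arctan_tan) auto
  then show ?thesis by (simp only: tan_cot)
qed

lemma cis_add_2pi: "cis (x + 2 * pi) = cis x"
  by (simp add: cis_mult [symmetric])

lemma arclen_bounds: "0 \<le> arclen A B" "arclen A B < 2 * pi"
  unfolding arclen_def using Arg_bounded[of "B / A"] by auto

lemma arclen_cis_add:
  assumes "0 \<le> t" "t < 2 * pi"
  shows "arclen (cis a) (cis (a + t)) = t"
proof (cases "t \<le> pi")
  case True
  then show ?thesis using assms by (simp add: arclen_def cis_divide Arg_cis)
next
  case False
  have "cis t = cis (t - 2 * pi)" using cis_add_2pi[of "t - 2 * pi"] by simp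
  moreover have "Arg (cis (t - 2 * pi)) = t - 2 * pi" using assms False by (intro Arg_cis) auto
  ultimately show ?thesis using assms False by (simp add: arclen_def cis_divide)
qed

lemma cis_add_arclen:
  assumes "cmod x = 1"
  shows "cis (a + arclen (cis a) x) = x"
proof -
  have "cmod (x / cis a) = 1" using assms by (simp add: norm_divide)
  moreover have "x / cis a \<noteq> 0" using assms by auto
  ultimately have "cis (Arg (x / cis a)) = x / cis a" using cis_Arg[of "x / cis a"] by (simp add: sgn_eq)
  then have "cis (arclen (cis a) x) = x / cis a" by (simp add: arclen_def cis_add_2pi)
  then show ?thesis by (simp add: cis_mult [symmetric])
qed

lemma arclen_eqI:
  assumes "A = cis a" "B = cis (a + t)" "0 \<le> t" "t < 2 * pi"
  shows "arclen A B = t"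
  using assms arclen_cis_add by simp

lemma mem_closed_arcE:
  assumes "x \<in> closed_arc A B" "A = cis a" "B = cis (a + L)" "0 \<le> L" "L < 2 * pi"
  obtains t where "0 \<le> t" "t \<le> L" "x = cis (a + t)"
  using assms arclen_bounds[of A x] cis_add_arclen[of x a]
  by (auto simp: closed_arc_def arclen_cis_add)

lemma mem_closed_arcI:
  assumes "A = cis a" "B = cis (a + L)" "0 \<le> t" "t \<le> L" "L < 2 * pi"
  shows "cis (a + t) \<in> closed_arc A B"
  using assms by (simp add: closed_arc_def arclen_cis_add)

lemma mem_open_arcI:
  assumes "A = cis a" "B = cis (a + L)" "0 < t" "t < L" "L < 2 * pi"
  shows "cis (a + t) \<in> open_arc A B"
  using assms by (simp add: open_arc_def arclen_cis_add)

definition central_angle :: "nat \<Rightarrow> real" where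
  "central_angle g = 2 * pi / nsides g"

lemma side_dir_eq: "side_dir g i = of_int i * central_angle g"
  by (simp add: side_dir_def central_angle_def)

locale fundamental_polygon =
  fixes g :: nat
  assumes genus_ge_2: "2 \<le> g"
begin

abbreviation \<delta> where "\<delta> \<equiv> central_angle g"
abbreviation \<beta> where "\<beta> \<equiv> half_width g"

lemma delta_bounds: "0 < \<delta>" "\<delta> \<le> pi/6"
  using genus_ge_2 by (simp_all add: central_angle_def nsides_def field_simps)

lemma beta_bounds: "7/10 * \<delta> \<le> \<beta>" "\<beta> \<le> 18/25 * \<delta>"
  using arccos_sqrt_cos_bounds[OF delta_bounds] by (simp_all add: half_width_def central_angle_def)

lemma cos_beta_bounds: "0 < cos \<beta>" "cos \<beta> < 1"
proof -
  have "\<beta> \<le> pi/6" using beta_bounds delta_bounds by simp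
  moreover have "0 < \<beta>" using beta_bounds delta_bounds by simp
  ultimately show "0 < cos \<beta>" "cos \<beta> < 1"
    using pi_gt3 by (auto intro: cos_gt_zero_pi cos_monotone_0_pi[of 0 \<beta>, simplified])
qed

lemma Pt_eq: "Pt g i = cis (of_int i * \<delta> - \<beta>)"
  by (simp add: Pt_def side_dir_eq)

lemma Qt_eq: "Qt g i = cis (of_int i * \<delta> - \<beta> + (2 * \<beta> - \<delta>))"
  by (simp add: Qt_def side_dir_eq algebra_simps)

lemma angle_bounds: "0 < \<delta>" "\<delta> < 1" "\<delta> < 2 * \<beta>" "\<beta> < \<delta>"
  using beta_bounds delta_bounds pi_less_4 by auto

lemma arclen_Pt_Qt: "arclen (Pt g j) (Qt g j) = 2 * \<beta> - \<delta>"
  using angle_bounds pi_gt3 by (intro arclen_eqI[OF Pt_eq Qt_eq]) auto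

lemma Tmap_cis_side_dir_moebius:
  defines "C \<equiv> 1 / cos \<beta>"
  shows "Tmap g i (cis (side_dir g i + u)) =
    cis (side_dir g (sigma g i)) * ((C * cis u - 1) / (cis u - C))"
proof -
  define a where "a = cis (side_dir g i)"
  define s where "s = cis (side_dir g (sigma g i))"
  have C: "1 < C" "(iso_radius g)\<^sup>2 = C\<^sup>2 - 1"
    using cos_beta_bounds
    by (simp_all add: C_def iso_radius_def tan_def power_divide field_simps sin_squared_eq)
  have "cis u \<noteq> C"
    using C(1) by (metis norm_cis norm_of_real abs_of_pos less_irrefl order.strict_trans zero_less_one)
  have "a \<noteq> 0" "cnj a = inverse a" by (simp_all add: a_def cis_cnj)
  have "Tmap g i (cis (side_dir g i + u)) =
      a * s * cnj (C * a + (C\<^sup>2 - 1) / cnj (a * cis u - C * a))"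
    by (simp add: Tmap_def Let_def C(2) a_def s_def C_def iso_center_def cis_mult)
  also have "\<dots> = a * s * (C * inverse a + (C\<^sup>2 - 1) / (a * (cis u - C)))"
    using \<open>cnj a = inverse a\<close> by (simp add: algebra_simps)
  also have "\<dots> = s * (C + (C\<^sup>2 - 1) / (cis u - C))"
    using \<open>a \<noteq> 0\<close> \<open>cis u \<noteq> C\<close> by (simp add: field_simps)
  also have "\<dots> = s * ((C * cis u - 1) / (cis u - C))"
    using \<open>cis u \<noteq> C\<close> by (simp add: field_simps power2_eq_square)
  finally show ?thesis unfolding s_def .
qed

definition stretch :: real where
  "stretch = (1 + cos \<beta>) / (1 - cos \<beta>)"

definition boundary_angle :: "real \<Rightarrow> real" where
  "boundary_angle u = arctan (stretch * tan (u/2))"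

lemma stretch_pos: "0 < stretch"
  using cos_beta_bounds by (simp add: stretch_def)

lemma Tmap_cis_side_dir:
  assumes "-pi < u" "u < pi"
  shows "Tmap g i (cis (side_dir g i + u)) = cis (side_dir g (sigma g i) + pi + 2 * boundary_angle u)"
proof -
  define C K t where "C = 1 / cos \<beta>" and "K = stretch" and "t = tan (u/2)"
  have "1 < C" "K * (C - 1) = C + 1"
    using cos_beta_bounds by (simp_all add: C_def K_def stretch_def field_simps)
  have "cos (u/2) \<noteq> 0" using assms by (intro order.strict_implies_not_eq[symmetric] cos_gt_zero_pi) auto
  then have "cis u = (1 + \<i> * t) / (1 - \<i> * t)" using cis_double_eq_cayley[of "u/2"] by (simp add: t_def)
  then have "(C * cis u - 1) / (cis u - C) = - (1 + \<i> * (K * t)) / (1 - \<i> * (K * t))"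
    using moebius_cayley[OF \<open>1 < C\<close> \<open>K * (C - 1) = C + 1\<close>] by simp
  also have "\<dots> = - cis (2 * boundary_angle u)"
    using cis_double_eq_cayley[of "arctan (K * t)"]
    by (simp add: boundary_angle_def K_def t_def tan_arctan minus_divide_left)
  finally have "(C * cis u - 1) / (cis u - C) = - cis (2 * boundary_angle u)" .
  then show ?thesis
    using Tmap_cis_side_dir_moebius[of i u, folded C_def] by (simp add: cis_mult [symmetric])
qed

lemma boundary_angle_mono:
  assumes "-pi < u" "u \<le> v" "v < pi"
  shows "boundary_angle u \<le> boundary_angle v"
  using assms stretch_pos
  by (auto simp: boundary_angle_def arctan_le_iff intro!: mult_left_mono tan_mono_le)

lemma boundary_angle_minus: "boundary_angle (-u) = - boundary_angle u"
  by (simp add: boundary_angle_def arctan_minus)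

lemma stretch_tan_half_beta_sq: "stretch * tan (\<beta>/2) ^ 2 = 1"
proof -
  have "tan (\<beta>/2) ^ 2 = sin \<beta> ^ 2 / (cos \<beta> + 1) ^ 2"
    using tan_half[of "\<beta>/2"] by (simp add: power_divide)
  also have "\<dots> = (1 - cos \<beta>) * (1 + cos \<beta>) / ((1 + cos \<beta>) * (1 + cos \<beta>))"
    by (simp add: sin_squared_eq algebra_simps power2_eq_square)
  also have "\<dots> = (1 - cos \<beta>) / (1 + cos \<beta>)"
    using cos_beta_bounds by simp
  finally show ?thesis using cos_beta_bounds by (simp add: stretch_def)
qed

lemma boundary_angle_beta: "boundary_angle \<beta> = pi/2 - \<beta>/2"
proof -
  have "0 < \<beta>/2" "\<beta>/2 < pi/2" using angle_bounds pi_gt3 by auto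
  then have "stretch * tan (\<beta>/2) = inverse (tan (\<beta>/2))"
    using stretch_tan_half_beta_sq tan_gt_zero[of "\<beta>/2"] by (simp add: field_simps power2_eq_square)
  then show ?thesis
    using arctan_inverse_tan[of "\<beta>/2"] \<open>0 < \<beta>/2\<close> \<open>\<beta>/2 < pi/2\<close> by (simp add: boundary_angle_def)
qed

lemma boundary_angle_half_delta: "pi/2 + \<beta>/2 - \<delta> < boundary_angle (\<delta>/2)"
proof -
  have range: "0 < \<delta> - \<beta>/2" "\<delta> - \<beta>/2 < pi/2" using angle_bounds pi_gt3 by auto
  then have "0 < tan (\<delta> - \<beta>/2)" by (intro tan_gt_zero) auto
  have "stretch * tan (\<beta>/2) ^ 2 < stretch * (tan (\<delta>/4) * tan (\<delta> - \<beta>/2))"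
    by (rule mult_strict_left_mono[OF tan_half_sq_less[OF delta_bounds beta_bounds] stretch_pos])
  then have "inverse (tan (\<delta> - \<beta>/2)) < stretch * tan (\<delta>/4)"
    using stretch_tan_half_beta_sq \<open>0 < tan (\<delta> - \<beta>/2)\<close>
    by (simp add: inverse_eq_divide divide_less_eq mult.assoc)
  moreover have "\<delta>/2/2 = \<delta>/4" by simp
  ultimately have "arctan (inverse (tan (\<delta> - \<beta>/2))) < boundary_angle (\<delta>/2)"
    unfolding boundary_angle_def by (simp only:) (rule arctan_monotone)
  then show ?thesis using arctan_inverse_tan[OF range] by simp
qed

lemma boundary_angle_delta_minus_beta: "boundary_angle (\<delta> - \<beta>) < pi/2 + \<beta>/2 - \<delta>"
proof -
  have range: "0 < \<delta> - \<beta>/2" "\<delta> - \<beta>/2 < pi/2" using angle_bounds pi_gt3 by auto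
  then have "0 < tan (\<delta> - \<beta>/2)" by (intro tan_gt_zero) auto
  have "stretch * (tan ((\<delta> - \<beta>)/2) * tan (\<delta> - \<beta>/2)) < stretch * tan (\<beta>/2) ^ 2"
    by (rule mult_strict_left_mono[OF tan_mult_less_tan_half_sq[OF delta_bounds beta_bounds] stretch_pos])
  then have "stretch * tan ((\<delta> - \<beta>)/2) < inverse (tan (\<delta> - \<beta>/2))"
    using stretch_tan_half_beta_sq \<open>0 < tan (\<delta> - \<beta>/2)\<close>
    by (simp add: inverse_eq_divide less_divide_eq mult.assoc)
  then have "boundary_angle (\<delta> - \<beta>) < arctan (inverse (tan (\<delta> - \<beta>/2)))"
    unfolding boundary_angle_def by (rule arctan_monotone)
  then show ?thesis using arctan_inverse_tan[OF range] by simp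
qed

lemma boundary_angle_surj:
  assumes "-(pi/2) < y" "y < pi/2"
  obtains u where "-pi < u" "u < pi" "boundary_angle u = y"
proof
  define u where "u = 2 * arctan (tan y / stretch)"
  show "-pi < u" "u < pi"
    using arctan_lbound[of "tan y / stretch"] arctan_ubound[of "tan y / stretch"] by (auto simp: u_def)
  show "boundary_angle u = y"
    using stretch_pos assms by (simp add: u_def boundary_angle_def tan_arctan arctan_tan)
qed

lemma mem_side_arcE:
  assumes "x \<in> closed_arc (Pt g j) (Qt g j)"
  obtains t where "0 \<le> t" "t \<le> 2 * \<beta> - \<delta>" "x = cis (of_int j * \<delta> - \<beta> + t)"
    "arclen (Pt g j) x = t" "arclen x (Qt g j) = 2 * \<beta> - \<delta> - t"
proof -
  obtain t where t: "0 \<le> t" "t \<le> 2 * \<beta> - \<delta>" "x = cis (of_int j * \<delta> - \<beta> + t)"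
    using assms angle_bounds pi_gt3 by (auto elim!: mem_closed_arcE[OF _ Pt_eq Qt_eq])
  moreover have "arclen (Pt g j) x = t"
    using t angle_bounds pi_gt3 by (intro arclen_eqI[OF Pt_eq]) auto
  moreover have "arclen x (Qt g j) = 2 * \<beta> - \<delta> - t"
    using t angle_bounds pi_gt3 by (intro arclen_eqI[OF t(3)]) (auto simp: Qt_eq)
  ultimately show thesis using that by blast
qed

lemma Tmap_first_half:
  assumes "x \<in> closed_arc (Pt g j) (Qt g j)" "arclen (Pt g j) x \<le> arclen (Pt g j) (Qt g j) / 2"
  shows "Tmap g j x \<in> closed_arc (Qt g (sigma g j + 1)) (Pt g (sigma g j + 2))"
proof -
  define s where "s = of_int (sigma g j) * \<delta> + \<beta>"
  obtain t where t: "0 \<le> t" "x = cis (side_dir g j + (t - \<beta>))" "t \<le> \<beta> - \<delta>/2"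
    using assms by (auto simp: arclen_Pt_Qt side_dir_eq algebra_simps elim!: mem_side_arcE)
  then have "-pi < t - \<beta>" "t - \<beta> < pi" using angle_bounds pi_gt3 by auto
  have "boundary_angle (-\<beta>) \<le> boundary_angle (t - \<beta>)"
       "boundary_angle (t - \<beta>) \<le> boundary_angle (-(\<delta>/2))"
    using t angle_bounds pi_gt3 by (auto intro!: boundary_angle_mono)
  then have "0 \<le> pi + 2 * boundary_angle (t - \<beta>) - \<beta>"
            "pi + 2 * boundary_angle (t - \<beta>) - \<beta> \<le> 2 * \<delta> - 2 * \<beta>"
    using boundary_angle_beta boundary_angle_half_delta by (simp_all add: boundary_angle_minus)
  moreover have "Tmap g j x = cis (s + (pi + 2 * boundary_angle (t - \<beta>) - \<beta>))"
    using Tmap_cis_side_dir[OF \<open>-pi < t - \<beta>\<close> \<open>t - \<beta> < pi\<close>, where i = j]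
    by (simp add: t s_def side_dir_eq algebra_simps)
  moreover have "Qt g (sigma g j + 1) = cis s" "Pt g (sigma g j + 2) = cis (s + (2 * \<delta> - 2 * \<beta>))"
    by (simp_all add: s_def Pt_eq Qt_eq algebra_simps)
  ultimately show ?thesis
    using angle_bounds pi_gt3 by (auto intro: mem_closed_arcI)
qed

lemma Tmap_second_half:
  assumes "x \<in> closed_arc (Pt g j) (Qt g j)" "arclen x (Qt g j) \<le> arclen (Pt g j) (Qt g j) / 2"
  shows "Tmap g (j - 1) x \<in> closed_arc (Qt g (theta g (j - 1))) (Pt g (theta g (j - 1) + 1))"
proof -
  define s where "s = of_int (sigma g (j - 1)) * \<delta> - 2 * \<delta> + \<beta>"
  obtain t where t: "t \<le> 2 * \<beta> - \<delta>" "x = cis (side_dir g (j - 1) + (t - \<beta> + \<delta>))"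
      "\<beta> - \<delta>/2 \<le> t"
    using assms by (auto simp: arclen_Pt_Qt side_dir_eq algebra_simps elim!: mem_side_arcE)
  then have "-pi < t - \<beta> + \<delta>" "t - \<beta> + \<delta> < pi" using angle_bounds pi_gt3 by auto
  have "boundary_angle (\<delta>/2) \<le> boundary_angle (t - \<beta> + \<delta>)"
       "boundary_angle (t - \<beta> + \<delta>) \<le> boundary_angle \<beta>"
    using t angle_bounds pi_gt3 by (auto intro!: boundary_angle_mono)
  then have "0 \<le> 2 * boundary_angle (t - \<beta> + \<delta>) - pi + 2 * \<delta> - \<beta>"
            "2 * boundary_angle (t - \<beta> + \<delta>) - pi + 2 * \<delta> - \<beta> \<le> 2 * \<delta> - 2 * \<beta>"
    using boundary_angle_beta boundary_angle_half_delta by simp_all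
  moreover have
    "Tmap g (j - 1) x = cis (s + (2 * boundary_angle (t - \<beta> + \<delta>) - pi + 2 * \<delta> - \<beta>))"
  proof -
    have "Tmap g (j - 1) x =
        cis (s + (2 * boundary_angle (t - \<beta> + \<delta>) - pi + 2 * \<delta> - \<beta>) + 2 * pi)"
      using Tmap_cis_side_dir[OF \<open>-pi < t - \<beta> + \<delta>\<close> \<open>t - \<beta> + \<delta> < pi\<close>,
          where i = "j - 1"]
      by (simp add: t s_def side_dir_eq algebra_simps)
    then show ?thesis by (simp only: cis_add_2pi)
  qed
  moreover have "Qt g (theta g (j - 1)) = cis s"
      "Pt g (theta g (j - 1) + 1) = cis (s + (2 * \<delta> - 2 * \<beta>))"
    by (simp_all add: s_def theta_def Pt_eq Qt_eq algebra_simps)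
  ultimately show ?thesis
    using angle_bounds pi_gt3 by (auto intro: mem_closed_arcI)
qed

lemma vertex_preimage:
  obtains u where "-(\<delta>/2) < u" "u < \<beta> - \<delta>" "boundary_angle u = \<delta> - \<beta>/2 - pi/2"
proof -
  have "-(pi/2) < \<delta> - \<beta>/2 - pi/2" "\<delta> - \<beta>/2 - pi/2 < pi/2" using angle_bounds pi_gt3 by auto
  then obtain u where u: "-pi < u" "u < pi" "boundary_angle u = \<delta> - \<beta>/2 - pi/2"
    by (rule boundary_angle_surj)
  have "-(\<delta>/2) < u"
  proof (rule ccontr)
    assume "\<not> -(\<delta>/2) < u"
    then have "boundary_angle u \<le> boundary_angle (-(\<delta>/2))"
      using u angle_bounds by (intro boundary_angle_mono) auto
    then show False using u boundary_angle_half_delta by (simp add: boundary_angle_minus)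
  qed
  moreover have "u < \<beta> - \<delta>"
  proof (rule ccontr)
    assume "\<not> u < \<beta> - \<delta>"
    then have "boundary_angle (\<beta> - \<delta>) \<le> boundary_angle u"
      using u angle_bounds pi_gt3 by (intro boundary_angle_mono) auto
    then show False
      using u boundary_angle_delta_minus_beta boundary_angle_minus[of "\<delta> - \<beta>"] by simp
  qed
  ultimately show thesis using that u(3) by blast
qed

lemma Tmap_attains_vertices:
  "\<exists>a b. a \<in> open_arc (Pt g j) (Qt g j) \<and> b \<in> open_arc (Pt g j) (Qt g j) \<and>
     arclen (Pt g j) a > arclen (Pt g j) (Qt g j) / 2 \<and>
     arclen b (Qt g j) > arclen (Pt g j) (Qt g j) / 2 \<and>
     Tmap g j a = Pt g (rho g j + 1) \<and>
     Tmap g (j - 1) b = Qt g (theta g (j - 1))"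
proof -
  obtain u where u: "-(\<delta>/2) < u" "u < \<beta> - \<delta>" "boundary_angle u = \<delta> - \<beta>/2 - pi/2"
    by (rule vertex_preimage)
  then have "-pi < u" "u < pi" using angle_bounds pi_gt3 by auto
  define p where "p = of_int j * \<delta> - \<beta>"
  define a where "a = cis (p + (u + \<beta>))"
  define b where "b = cis (p + (\<beta> - \<delta> - u))"
  have bounds: "0 < u + \<beta>" "u + \<beta> < 2 * \<beta> - \<delta>" "0 < \<beta> - \<delta> - u" "\<beta> - \<delta> - u < 2 * \<beta> - \<delta>"
    using u angle_bounds by auto
  have "a \<in> open_arc (Pt g j) (Qt g j)" "b \<in> open_arc (Pt g j) (Qt g j)"
    unfolding a_def b_def p_def
    by (intro mem_open_arcI[OF Pt_eq Qt_eq]; use bounds angle_bounds pi_gt3 in auto)+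
  moreover have "arclen (Pt g j) a = u + \<beta>"
    unfolding a_def p_def using bounds angle_bounds pi_gt3 by (intro arclen_eqI[OF Pt_eq]) auto
  moreover have "arclen b (Qt g j) = u + \<beta>"
    unfolding b_def using bounds angle_bounds pi_gt3
    by (intro arclen_eqI[of _ "p + (\<beta> - \<delta> - u)"]) (auto simp: Qt_eq p_def algebra_simps)
  moreover have "Tmap g j a = Pt g (rho g j + 1)"
    using Tmap_cis_side_dir[OF \<open>-pi < u\<close> \<open>u < pi\<close>, where i = j] u(3)
    by (simp add: a_def p_def side_dir_eq rho_def Pt_eq algebra_simps)
  moreover have "Tmap g (j - 1) b = Qt g (theta g (j - 1))"
  proof -
    have "Tmap g (j - 1) b = cis (of_int (sigma g (j - 1)) * \<delta> - 2 * \<delta> + \<beta> + 2 * pi)"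
      using Tmap_cis_side_dir[of "-u", where i = "j - 1"] u \<open>-pi < u\<close> \<open>u < pi\<close>
      by (simp add: b_def p_def side_dir_eq boundary_angle_minus algebra_simps)
    then have "Tmap g (j - 1) b = cis (of_int (sigma g (j - 1)) * \<delta> - 2 * \<delta> + \<beta>)"
      by (simp only: cis_add_2pi)
    then show ?thesis by (simp add: theta_def Qt_eq algebra_simps)
  qed
  ultimately show ?thesis
    using u by (intro exI[of _ a] exI[of _ b]) (simp add: arclen_Pt_Qt)
qed

end

theorem corollary8p2:
  fixes g :: nat and j :: int
  assumes "g \<ge> 2"
  shows "(\<exists>a b. a \<in> open_arc (Pt g j) (Qt g j) \<and> b \<in> open_arc (Pt g j) (Qt g j) \<and>
            arclen (Pt g j) a > arclen (Pt g j) (Qt g j) / 2 \<and>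
            arclen b (Qt g j) > arclen (Pt g j) (Qt g j) / 2 \<and>
            Tmap g j a = Pt g (rho g j + 1) \<and>
            Tmap g (j - 1) b = Qt g (theta g (j - 1)))
       \<and> (\<forall>x \<in> closed_arc (Pt g j) (Qt g j).
            arclen (Pt g j) x \<le> arclen (Pt g j) (Qt g j) / 2 \<longrightarrow>
            Tmap g j x \<in> closed_arc (Qt g (sigma g j + 1)) (Pt g (sigma g j + 2)))
       \<and> (\<forall>x \<in> closed_arc (Pt g j) (Qt g j).
            arclen x (Qt g j) \<le> arclen (Pt g j) (Qt g j) / 2 \<longrightarrow>
            Tmap g (j - 1) x \<in> closed_arc (Qt g (theta g (j - 1))) (Pt g (theta g (j - 1) + 1)))"
proof -
  interpret fundamental_polygon g using assms by unfold_locales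
  show ?thesis using Tmap_attains_vertices Tmap_first_half Tmap_second_half by blast
qed

end
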